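(* Let $m\ge 2$ and $1\le\ell<m$, and let $0<\varepsilon<m-\ell$. There is no rule $\mathcal{F}$ that takes an $\ell$-truncated election and returns a single candidate such that, for every election $E$, $\mathrm{sc}_{\mathrm{MM}}(\mathcal{F}(\mathrm{trunc}(E,\ell)))\ge\frac{1}{m-\ell-\varepsilon}\max_{c\in C}\mathrm{sc}_{\mathrm{MM}}(c)$. In other words, no algorithm working on $\ell$-truncated ballots is a $\frac{1}{m-\ell-\varepsilon}$-approximation of the Minimax rule.
   Context: An election consists of a set $V$ of $n$ voters and a set $C$ of $m$ candidates; each voter $v$ has a strict linear order $\succ_v$ over $C$. For $c,c'\in C$, $\mathrm{sc}_{\mathrm{MM}}(c,c')=|\{v: c\succ_v c'\}|$ and $\mathrm{sc}_{\mathrm{MM}}(c)=\min_{c'\neq c}\mathrm{sc}_{\mathrm{MM}}(c,c')$; the Minimax rule selects candidates maximizing $\mathrm{sc}_{\mathrm{MM}}$. $\mathrm{trunc}(E,\ell)$ is the partial election in which each voter reveals only the ordered list of her top $\ell$ candidates. *)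

theory Defs
  imports Complex_Main
begin

text \<open>A ballot (linear order over the candidate set C) is a list of the candidates,
  most preferred first. An election is a list of ballots, one per voter.\<close>

definition is_ballot :: "'a set \<Rightarrow> 'a list \<Rightarrow> bool" where
  "is_ballot C r \<longleftrightarrow> distinct r \<and> set r = C"

definition is_election :: "'a set \<Rightarrow> 'a list list \<Rightarrow> bool" where
  "is_election C E \<longleftrightarrow> (\<forall>r\<in>set E. is_ballot C r)"

definition prefers :: "'a list \<Rightarrow> 'a \<Rightarrow> 'a \<Rightarrow> bool" where
  "prefers r c c' \<longleftrightarrow> (\<exists>i j. i < j \<and> j < length r \<and> r ! i = c \<and> r ! j = c')"

definition sc_pair :: "'a list list \<Rightarrow> 'a \<Rightarrow> 'a \<Rightarrow> nat" where
  "sc_pair E c c' = card {i. i < length E \<and> prefers (E ! i) c c'}"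

definition sc_MM :: "'a set \<Rightarrow> 'a list list \<Rightarrow> 'a \<Rightarrow> nat" where
  "sc_MM C E c = Min ((\<lambda>c'. sc_pair E c c') ` (C - {c}))"

definition trunc :: "'a list list \<Rightarrow> nat \<Rightarrow> 'a list list" where
  "trunc E l = map (take l) E"

end

theory Submission
  imports Defs
begin

text \<open>Place the candidates on a cycle c_0, ..., c_(m-1) and give voter i the top segment
  c_i, ..., c_(i+l-1). The rule only sees these segments, so its choice c_k is fixed before
  the rest of the ballots is. Now complete every ballot by ranking p = c_(k-1) right after its
  top segment (if p is not already in it). Then p precedes c_k on every ballot except that of
  voter k, so the Minimax score of c_k is at most 1, whereas every other candidate lies in only
  l top segments, so p beats it on at least m - l ballots. The approximation ratio is therefore
  at least m - l > m - l - \<epsilon>.\<close>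

lemma prefers_asym: "distinct r \<Longrightarrow> prefers r a b \<Longrightarrow> \<not> prefers r b a"
  unfolding prefers_def by (metis less_asym less_trans nth_eq_iff_index_eq)

lemma prefers_append_mem: "a \<in> set xs \<Longrightarrow> b \<in> set ys \<Longrightarrow> prefers (xs @ ys) a b"
  unfolding prefers_def in_set_conv_nth
  by (metis add_less_cancel_left length_append nth_append_left nth_append_length_plus
      trans_less_add1)

lemma prefers_append_right: "prefers ys a b \<Longrightarrow> prefers (xs @ ys) a b"
  unfolding prefers_def
  by (metis add_less_cancel_left length_append nth_append_length_plus)

lemma prefers_Cons_head: "b \<in> set ys \<Longrightarrow> prefers (a # ys) a b"
  unfolding prefers_def in_set_conv_nth
  by (metis Suc_less_eq length_Cons nth_Cons_0 nth_Cons_Suc zero_less_Suc)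

lemma prefers_take_mem:
  assumes "distinct r" "prefers r a b" "b \<in> set (take l r)"
  shows "a \<in> set (take l r)"
proof -
  obtain i j where ij: "i < j" "j < length r" "r ! i = a" "r ! j = b"
    using assms(2) unfolding prefers_def by blast
  obtain j' where "j' < length (take l r)" "take l r ! j' = b"
    using assms(3) by (auto simp: in_set_conv_nth)
  then have "j < l"
    using ij assms(1) by (metis length_take min_less_iff_conj nth_eq_iff_index_eq nth_take)
  then show ?thesis
    using ij by (metis in_set_conv_nth length_take min_less_iff_conj nth_take order.strict_trans)
qed

definition promote :: "nat \<Rightarrow> 'a \<Rightarrow> 'a list \<Rightarrow> 'a list" where
  "promote l p r =
    (if p \<in> set (take l r) then r else take l r @ p # removeAll p (drop l r))"

lemma is_ballot_promote:
  assumes "is_ballot C r" "p \<in> C"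
  shows "is_ballot C (promote l p r)"
proof -
  have "distinct r" "set r = C" using assms(1) by (auto simp: is_ballot_def)
  moreover have "set (take l r) \<inter> set (drop l r) = {}"
    using \<open>distinct r\<close> by (metis append_take_drop_id distinct_append)
  moreover have "p \<in> set (take l r) \<or> p \<in> set (drop l r)"
    using assms(2) \<open>set r = C\<close> by (metis Un_iff append_take_drop_id set_append)
  ultimately show ?thesis
    unfolding is_ballot_def promote_def
    by (auto simp: distinct_removeAll dest: in_set_takeD in_set_dropD)
      (metis Un_iff append_take_drop_id set_append)
qed

lemma take_promote: "l \<le> length r \<Longrightarrow> take l (promote l p r) = take l r"
  by (simp add: promote_def)

lemma prefers_promote:
  assumes "p \<in> set r" "z \<in> set r" "z \<noteq> p" "z \<notin> set (take l r)"
  shows "prefers (promote l p r) p z"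
proof -
  have z: "z \<in> set (drop l r)"
    using assms(2,4) by (metis Un_iff append_take_drop_id set_append)
  show ?thesis
  proof (cases "p \<in> set (take l r)")
    case True
    then show ?thesis
      using z prefers_append_mem by (fastforce simp: promote_def)
  next
    case False
    then show ?thesis
      using z assms(3) by (simp add: promote_def prefers_append_right prefers_Cons_head)
  qed
qed

lemma promote_preserves_prefers:
  assumes "distinct r" "prefers r p x"
  shows "prefers (promote l p r) p x"
proof (cases "x \<in> set (take l r)")
  case True
  then show ?thesis
    using prefers_take_mem[OF assms] assms(2) by (simp add: promote_def)
next
  case False
  moreover have "p \<in> set r" "x \<in> set r" "x \<noteq> p"
    using assms unfolding prefers_def by (auto simp: nth_eq_iff_index_eq)
  ultimately show ?thesis by (intro prefers_promote)
qed

lemma prefers_rotate_pred: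
  assumes "distinct xs" "i < length xs" "k < length xs" "i \<noteq> k"
  shows "prefers (rotate i xs) (xs ! ((k + length xs - 1) mod length xs)) (xs ! k)"
proof -
  let ?n = "length xs"
  define d where "d = (if i \<le> k then k - i else k + ?n - i)"
  have d: "0 < d" "d < ?n" using assms by (auto simp: d_def)
  have "(i + d) mod ?n = k"
    using assms by (auto simp: d_def)
  moreover have "(i + (d - 1)) mod ?n = (k + ?n - 1) mod ?n"
  proof (cases "i \<le> k")
    case True
    then have "k + ?n - 1 = (k - 1) + ?n" "i + (d - 1) = k - 1"
      using assms by (auto simp: d_def)
    then show ?thesis by simp
  qed (use assms in \<open>simp add: d_def\<close>)
  ultimately have "rotate i xs ! d = xs ! k"
    and "rotate i xs ! (d - 1) = xs ! ((k + ?n - 1) mod ?n)"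
    using d by (simp_all add: nth_rotate)
  then show ?thesis
    unfolding prefers_def using d by (intro exI[of _ "d - 1"] exI[of _ d]) auto
qed

lemma card_rotate_take_mem_le:
  assumes "distinct xs"
  shows "card {i. i < length xs \<and> y \<in> set (take l (rotate i xs))} \<le> l"
proof (cases "y \<in> set xs")
  case False
  then have "{i. i < length xs \<and> y \<in> set (take l (rotate i xs))} = {}"
    by (auto dest: in_set_takeD)
  then show ?thesis by (metis card.empty zero_le)
next
  case True
  let ?n = "length xs"
  obtain k where k: "k < ?n" "xs ! k = y" using True by (auto simp: in_set_conv_nth)
  have "{i. i < ?n \<and> y \<in> set (take l (rotate i xs))} \<subseteq> (\<lambda>j. (k + ?n - j) mod ?n) ` {..<l}"
  proof safe
    fix i assume i: "i < ?n" "y \<in> set (take l (rotate i xs))"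
    then obtain j where j: "j < l" "j < ?n" "xs ! ((i + j) mod ?n) = y"
      by (auto simp: in_set_conv_nth nth_rotate)
    moreover have "(i + j) mod ?n < ?n"
      using i(1) by (meson le0 le_less_trans mod_less_divisor)
    ultimately have "(i + j) mod ?n = k"
      using k assms by (metis nth_eq_iff_index_eq)
    then have "k + ?n - j = (if i + j < ?n then i + ?n else i)"
      using i(1) j(2) by (auto simp: mod_if)
    then have "i = (k + ?n - j) mod ?n"
      using i(1) by simp
    then show "i \<in> (\<lambda>j. (k + ?n - j) mod ?n) ` {..<l}" using j by blast
  qed
  then have "card {i. i < ?n \<and> y \<in> set (take l (rotate i xs))}
      \<le> card ((\<lambda>j. (k + ?n - j) mod ?n) ` {..<l})"
    by (intro card_mono) auto
  also have "\<dots> \<le> l"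
    using card_image_le[of "{..<l}"] by simp
  finally show ?thesis .
qed

lemma sc_pair_map_upt: "sc_pair (map f [0..<n]) a b = card {i. i < n \<and> prefers (f i) a b}"
  by (simp add: sc_pair_def cong: conj_cong)

lemma sc_MM_le_sc_pair: "finite C \<Longrightarrow> c' \<in> C - {c} \<Longrightarrow> sc_MM C E c \<le> sc_pair E c c'"
  unfolding sc_MM_def by (intro Min_le) auto

lemma sc_MM_geI:
  "finite C \<Longrightarrow> C - {c} \<noteq> {} \<Longrightarrow> (\<And>c'. c' \<in> C - {c} \<Longrightarrow> k \<le> sc_pair E c c')
    \<Longrightarrow> k \<le> sc_MM C E c"
  unfolding sc_MM_def by (subst Min_ge_iff) auto

definition cyclic_profile :: "'a list \<Rightarrow> nat \<Rightarrow> 'a \<Rightarrow> 'a list list" where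
  "cyclic_profile cs l p = map (\<lambda>i. promote l p (rotate i cs)) [0..<length cs]"

lemma trunc_cyclic_profile:
  "l \<le> length cs \<Longrightarrow>
    trunc (cyclic_profile cs l p) l = map (\<lambda>i. take l (rotate i cs)) [0..<length cs]"
  by (simp add: trunc_def cyclic_profile_def take_promote)

lemma is_election_cyclic_profile:
  "distinct cs \<Longrightarrow> p \<in> set cs \<Longrightarrow> is_election (set cs) (cyclic_profile cs l p)"
  by (auto simp: is_election_def cyclic_profile_def is_ballot_def[of _ "rotate _ cs"]
      intro!: is_ballot_promote)

lemma sc_pair_cyclic_profile_pred_le:
  assumes "distinct cs" "k < length cs"
  defines "p \<equiv> cs ! ((k + length cs - 1) mod length cs)"
  shows "sc_pair (cyclic_profile cs l p) (cs ! k) p \<le> 1"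
proof -
  have "cs \<noteq> []" using assms(2) by auto
  then have p: "p \<in> set cs" by (simp add: p_def)
  have "{i. i < length cs \<and> prefers (promote l p (rotate i cs)) (cs ! k) p} \<subseteq> {k}"
  proof safe
    fix i assume i: "i < length cs" "prefers (promote l p (rotate i cs)) (cs ! k) p"
    have "is_ballot (set cs) (promote l p (rotate i cs))"
      using assms(1) p by (intro is_ballot_promote) (auto simp: is_ballot_def)
    then have "\<not> prefers (promote l p (rotate i cs)) p (cs ! k)"
      using i(2) by (auto simp: is_ballot_def dest: prefers_asym)
    then show "i = k"
      using prefers_rotate_pred[OF assms(1) i(1) assms(2)] assms(1)
      by (auto simp: p_def intro: promote_preserves_prefers)
  qed
  then have "sc_pair (cyclic_profile cs l p) (cs ! k) p \<le> card {k}"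
    unfolding cyclic_profile_def sc_pair_map_upt by (intro card_mono) auto
  then show ?thesis by simp
qed

lemma sc_pair_cyclic_profile_promoted_ge:
  assumes "distinct cs" "p \<in> set cs" "z \<in> set cs" "z \<noteq> p"
  shows "length cs - l \<le> sc_pair (cyclic_profile cs l p) p z"
proof -
  let ?n = "length cs"
  let ?Top = "{i. i < ?n \<and> z \<in> set (take l (rotate i cs))}"
  have "{..<?n} - ?Top \<subseteq> {i. i < ?n \<and> prefers (promote l p (rotate i cs)) p z}"
    using assms by (auto intro: prefers_promote)
  then have "card ({..<?n} - ?Top) \<le> sc_pair (cyclic_profile cs l p) p z"
    unfolding cyclic_profile_def sc_pair_map_upt by (intro card_mono) auto
  moreover have "card ({..<?n} - ?Top) = ?n - card ?Top"
    by (subst card_Diff_subset) auto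
  moreover have "card ?Top \<le> l"
    using assms(1) by (rule card_rotate_take_mem_le)
  ultimately show ?thesis by linarith
qed

lemma sc_MM_cyclic_profile:
  assumes "distinct cs" "2 \<le> length cs" "k < length cs"
  defines "p \<equiv> cs ! ((k + length cs - 1) mod length cs)"
  shows "sc_MM (set cs) (cyclic_profile cs l p) (cs ! k) \<le> 1"
    and "length cs - l \<le> sc_MM (set cs) (cyclic_profile cs l p) p"
proof -
  let ?n = "length cs"
  have "(k + ?n - 1) mod ?n \<noteq> k" "(k + ?n - 1) mod ?n < ?n"
    using assms(2,3) by (auto simp: mod_if)
  then have p: "p \<in> set cs - {cs ! k}"
    using assms(1,3) by (auto simp: p_def nth_eq_iff_index_eq)
  have "sc_pair (cyclic_profile cs l p) (cs ! k) p \<le> 1"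
    unfolding p_def by (rule sc_pair_cyclic_profile_pred_le[OF assms(1,3)])
  then show "sc_MM (set cs) (cyclic_profile cs l p) (cs ! k) \<le> 1"
    using sc_MM_le_sc_pair[OF _ p] by (meson List.finite_set order.trans)
  have "set cs - {p} \<noteq> {}"
    using assms(3) p nth_mem by fastforce
  then show "?n - l \<le> sc_MM (set cs) (cyclic_profile cs l p) p"
    using p assms(1) by (intro sc_MM_geI sc_pair_cyclic_profile_promoted_ge) auto
qed

theorem theorem7:
  fixes C :: "'a set" and m l :: nat and \<epsilon> :: real
  assumes "finite C" and "card C = m" and "m \<ge> 2"
    and "1 \<le> l" and "l < m"
    and "0 < \<epsilon>" and "\<epsilon> < real m - real l"
  shows "\<not> (\<exists>F :: 'a list list \<Rightarrow> 'a. \<forall>E. is_election C E \<longrightarrow>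
            F (trunc E l) \<in> C \<and>
            real (sc_MM C E (F (trunc E l)))
              \<ge> (1 / (real m - real l - \<epsilon>)) * real (Max (sc_MM C E ` C)))"
proof
  assume "\<exists>F :: 'a list list \<Rightarrow> 'a. \<forall>E. is_election C E \<longrightarrow>
            F (trunc E l) \<in> C \<and>
            real (sc_MM C E (F (trunc E l)))
              \<ge> (1 / (real m - real l - \<epsilon>)) * real (Max (sc_MM C E ` C))"
  then obtain F :: "'a list list \<Rightarrow> 'a" where F: "\<And>E. is_election C E \<Longrightarrow>
      F (trunc E l) \<in> C \<and>
      real (sc_MM C E (F (trunc E l))) \<ge> (1 / (real m - real l - \<epsilon>)) * real (Max (sc_MM C E ` C))"
    by blast
  obtain cs where cs: "distinct cs" "set cs = C" "length cs = m"
    using assms(1,2) finite_distinct_list distinct_card by metis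
  have trunc: "trunc (cyclic_profile cs l p) l = map (\<lambda>i. take l (rotate i cs)) [0..<m]" for p
    using cs(3) assms(5) by (simp add: trunc_cyclic_profile)
  have election: "is_election C (cyclic_profile cs l p)" if "p \<in> C" for p
    using is_election_cyclic_profile[OF cs(1)] that cs(2) by blast
  define x where "x = F (map (\<lambda>i. take l (rotate i cs)) [0..<m])"
  have "0 < m" using assms(3) by simp
  then have "cs ! 0 \<in> C" using cs by (metis nth_mem)
  then have "x \<in> C" using F[OF election] by (simp add: x_def trunc)
  then obtain k where k: "k < m" "cs ! k = x" using cs by (metis in_set_conv_nth)
  define p where "p = cs ! ((k + m - 1) mod m)"
  let ?E = "cyclic_profile cs l p"
  have "sc_MM C ?E x \<le> 1" "m - l \<le> sc_MM C ?E p"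
    using sc_MM_cyclic_profile[of cs k l] assms(3) cs k by (auto simp: p_def)
  moreover have "p \<in> C" using \<open>0 < m\<close> cs(2,3) by (auto simp: p_def)
  then have "sc_MM C ?E p \<le> Max (sc_MM C ?E ` C)" using assms(1) by simp
  moreover have "real (sc_MM C ?E x) \<ge> (1 / (real m - real l - \<epsilon>)) * real (Max (sc_MM C ?E ` C))"
    using F[OF election[OF \<open>p \<in> C\<close>]] by (simp add: x_def trunc k(2))
  ultimately have "real m - real l - \<epsilon> < real (Max (sc_MM C ?E ` C))"
    and "(1 / (real m - real l - \<epsilon>)) * real (Max (sc_MM C ?E ` C)) \<le> 1"
    using assms(5,6) by linarith+
  then show False
    using assms(7) by (simp add: field_simps)
qed

end
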